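(* Let $\mathcal{F}=(W,R)$ be a finite transitive frame and let $X_\mathcal{F}$ be constructed as described in the context. If $X_C$ is a T$_D$ space for every cluster $C$ of $\mathcal{F}$, then $X_\mathcal{F}$ is a T$_D$ space.
   Context: For a space $X$ and $Y\subseteq X$, $\mathrm{d}_X Y$ is the set of limit points of $Y$ ($x$ such that every set $O-\{x\}$, $O$ an open neighbourhood of $x$, meets $Y$). $X$ is T$_D$ if $\mathrm{d}_X\{x\}$ is closed for every $x\in X$. A subset $S$ is dense in $X$ if its closure is $X$, crowded in $X$ if $S\subseteq\mathrm{d}_XS$. A partition is dense (resp. crowded) if all its cells are dense (resp. crowded). For a transitive frame $(W,R)$: clusters are equivalence classes of $\{(x,y):x=y\text{ or }xRyRx\}$; the cluster of $x$ is degenerate if $x$ is irreflexive (then it is $\{x\}$), non-degenerate otherwise; $CRC'$ for clusters iff $xRy$ for representatives; $CR^\uparrow C'$ means $CRC'$ and not $C'RC$. Construction of $X_\mathcal{F}$: let $\mathscr{C}$ be the set of clusters of the finite transitive frame $\mathcal{F}$. For each $C\in\mathscr{C}$ choose a space $X_C$ with a partition $\{X_w:w\in C\}$: if $C=\{w\}$ is degenerate, $X_C=X_w=\{w\}$; if $C=\{w_1,\dots,w_k\}$ is non-degenerate, $X_C$ is a space with a crowded dense $k$-partition with cells labelled $X_{w_1},\dots,X_{w_k}$. The $X_C$ are pairwise disjoint. $X_\mathcal{F}=\bigcup_{C}X_C$, where $O\subseteq X_\mathcal{F}$ is open iff for every $C$, $O\cap X_C$ is open in $X_C$, and if $O\cap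 X_C\ne\emptyset$ then $X_{C'}\subseteq O$ for all $C'$ with $CR^\uparrow C'$. *)

theory Defs
  imports "HOL-Analysis.Analysis"
begin

definition TD_space :: "'a topology \<Rightarrow> bool" where
  "TD_space X \<longleftrightarrow> (\<forall>x\<in>topspace X. closedin X (X derived_set_of {x}))"

definition crowded_in :: "'a topology \<Rightarrow> 'a set \<Rightarrow> bool" where
  "crowded_in X S \<longleftrightarrow> S \<subseteq> X derived_set_of S"

definition dense_in :: "'a topology \<Rightarrow> 'a set \<Rightarrow> bool" where
  "dense_in X S \<longleftrightarrow> X closure_of S = topspace X"

definition finite_transitive_frame :: "'w set \<Rightarrow> ('w \<Rightarrow> 'w \<Rightarrow> bool) \<Rightarrow> bool" where
  "finite_transitive_frame W R \<longleftrightarrow> finite W \<and> (\<forall>x y. R x y \<longrightarrow> x \<in> W \<and> y \<in> W)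
     \<and> (\<forall>x y z. R x y \<longrightarrow> R y z \<longrightarrow> R x z)"

definition cluster_rel :: "'w set \<Rightarrow> ('w \<Rightarrow> 'w \<Rightarrow> bool) \<Rightarrow> 'w rel" where
  "cluster_rel W R = {(x,y). x \<in> W \<and> y \<in> W \<and> (x = y \<or> (R x y \<and> R y x))}"

definition clusters :: "'w set \<Rightarrow> ('w \<Rightarrow> 'w \<Rightarrow> bool) \<Rightarrow> 'w set set" where
  "clusters W R = W // cluster_rel W R"

definition degenerate_cluster :: "('w \<Rightarrow> 'w \<Rightarrow> bool) \<Rightarrow> 'w set \<Rightarrow> bool" where
  "degenerate_cluster R C \<longleftrightarrow> (\<exists>w. C = {w} \<and> \<not> R w w)"

definition cluster_R :: "('w \<Rightarrow> 'w \<Rightarrow> bool) \<Rightarrow> 'w set \<Rightarrow> 'w set \<Rightarrow> bool" where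
  "cluster_R R C C' \<longleftrightarrow> (\<exists>x\<in>C. \<exists>y\<in>C'. R x y)"

definition cluster_R_up :: "('w \<Rightarrow> 'w \<Rightarrow> bool) \<Rightarrow> 'w set \<Rightarrow> 'w set \<Rightarrow> bool" where
  "cluster_R_up R C C' \<longleftrightarrow> cluster_R R C C' \<and> \<not> cluster_R R C' C"

definition XC :: "('w \<Rightarrow> 'a set) \<Rightarrow> 'w set \<Rightarrow> 'a set" where
  "XC Xw C = (\<Union>w\<in>C. Xw w)"

definition XF_data :: "'w set \<Rightarrow> ('w \<Rightarrow> 'w \<Rightarrow> bool) \<Rightarrow> ('w \<Rightarrow> 'a set) \<Rightarrow> ('w set \<Rightarrow> 'a topology) \<Rightarrow> bool" where
  "XF_data W R Xw T \<longleftrightarrow>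
     (\<forall>v\<in>W. \<forall>w\<in>W. v \<noteq> w \<longrightarrow> Xw v \<inter> Xw w = {}) \<and>
     (\<forall>C\<in>clusters W R. topspace (T C) = XC Xw C \<and>
        (degenerate_cluster R C \<longrightarrow> (\<forall>w\<in>C. \<exists>p. Xw w = {p})) \<and>
        (\<not> degenerate_cluster R C \<longrightarrow>
           (\<forall>w\<in>C. Xw w \<noteq> {} \<and> crowded_in (T C) (Xw w) \<and> dense_in (T C) (Xw w))))"

definition XF :: "'w set \<Rightarrow> ('w \<Rightarrow> 'w \<Rightarrow> bool) \<Rightarrow> ('w \<Rightarrow> 'a set) \<Rightarrow> ('w set \<Rightarrow> 'a topology) \<Rightarrow> 'a topology" where
  "XF W R Xw T = topology (\<lambda>U. U \<subseteq> (\<Union>C\<in>clusters W R. XC Xw C) \<and>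
     (\<forall>C\<in>clusters W R. openin (T C) (U \<inter> XC Xw C) \<and>
        (U \<inter> XC Xw C \<noteq> {} \<longrightarrow>
           (\<forall>C'\<in>clusters W R. cluster_R_up R C C' \<longrightarrow> XC Xw C' \<subseteq> U))))"

end

theory Submission
  imports Defs
begin

text \<open>
  \<open>X\<^sub>\<F>\<close> is an ordered sum of the spaces \<open>X\<^sub>C\<close> along the strict order \<open>R\<^sup>\<up>\<close> on clusters.
  An open set of \<open>X\<^sub>C\<close>, enlarged by all summands above \<open>C\<close>, is open in \<open>X\<^sub>\<F>\<close>. Hence
  \<open>X\<^sub>C\<close> is a subspace of \<open>X\<^sub>\<F>\<close>, and a point of a summand above \<open>C\<close> has a neighbourhood
  missing \<open>X\<^sub>C\<close>, so it is never a limit point of \<open>x \<in> X\<^sub>C\<close>. Consequently the enlargement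
  of an open neighbourhood of \<open>x\<close> in \<open>X\<^sub>C\<close> avoiding \<open>d{x}\<close> is an open neighbourhood
  of \<open>x\<close> in \<open>X\<^sub>\<F>\<close> avoiding \<open>d{x}\<close>, and such neighbourhoods characterise \<open>T\<^sub>D\<close> spaces.
\<close>

lemma TD_space_iff_nbhd_disjnt_derived_set:
  "TD_space X \<longleftrightarrow>
     (\<forall>x\<in>topspace X. \<exists>U. openin X U \<and> x \<in> U \<and> disjnt U (X derived_set_of {x}))"
proof
  assume TD: "TD_space X"
  show "\<forall>x\<in>topspace X. \<exists>U. openin X U \<and> x \<in> U \<and> disjnt U (X derived_set_of {x})"
  proof
    fix x assume "x \<in> topspace X"
    moreover have "x \<notin> X derived_set_of {x}"
      by (auto simp: in_derived_set_of)
    ultimately show "\<exists>U. openin X U \<and> x \<in> U \<and> disjnt U (X derived_set_of {x})"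
      using TD unfolding TD_space_def
      by (intro exI[of _ "topspace X - X derived_set_of {x}"]) (auto simp: disjnt_iff)
  qed
next
  assume nbhd: "\<forall>x\<in>topspace X. \<exists>U. openin X U \<and> x \<in> U \<and> disjnt U (X derived_set_of {x})"
  show "TD_space X"
    unfolding TD_space_def
  proof
    fix x assume "x \<in> topspace X"
    with nbhd obtain U where U: "openin X U" "x \<in> U" "disjnt U (X derived_set_of {x})"
      by blast
    have "X derived_set_of {x} = X closure_of {x} - U"
      using U by (auto simp: closure_of_alt disjnt_iff in_derived_set_of)
    then show "closedin X (X derived_set_of {x})"
      using U(1) by (simp add: closedin_diff)
  qed
qed

definition ordered_sum_open ::
    "'i set \<Rightarrow> ('i \<Rightarrow> 'a topology) \<Rightarrow> ('i \<Rightarrow> 'i \<Rightarrow> bool) \<Rightarrow> 'a set \<Rightarrow> bool" where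
  "ordered_sum_open I T r U \<longleftrightarrow> U \<subseteq> (\<Union>i\<in>I. topspace (T i)) \<and>
     (\<forall>i\<in>I. openin (T i) (U \<inter> topspace (T i)) \<and>
        (U \<inter> topspace (T i) \<noteq> {} \<longrightarrow> (\<forall>j\<in>I. r i j \<longrightarrow> topspace (T j) \<subseteq> U)))"

definition ordered_sum_topology ::
    "'i set \<Rightarrow> ('i \<Rightarrow> 'a topology) \<Rightarrow> ('i \<Rightarrow> 'i \<Rightarrow> bool) \<Rightarrow> 'a topology" where
  "ordered_sum_topology I T r = topology (ordered_sum_open I T r)"

lemma istopology_ordered_sum_open: "istopology (ordered_sum_open I T r)"
  unfolding istopology_def
proof (intro conjI allI impI)
  fix S U assume S: "ordered_sum_open I T r S" and U: "ordered_sum_open I T r U"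
  show "ordered_sum_open I T r (S \<inter> U)"
    unfolding ordered_sum_open_def
  proof (intro conjI ballI impI)
    show "S \<inter> U \<subseteq> (\<Union>i\<in>I. topspace (T i))"
      using S unfolding ordered_sum_open_def by blast
  next
    fix i assume "i \<in> I"
    then have "openin (T i) ((S \<inter> topspace (T i)) \<inter> (U \<inter> topspace (T i)))"
      using S U unfolding ordered_sum_open_def by blast
    then show "openin (T i) (S \<inter> U \<inter> topspace (T i))"
      by (simp add: Int_ac)
  next
    fix i j assume "i \<in> I" "S \<inter> U \<inter> topspace (T i) \<noteq> {}" "j \<in> I" "r i j"
    then show "topspace (T j) \<subseteq> S \<inter> U"
      using S U unfolding ordered_sum_open_def by blast
  qed
next
  fix K assume K: "\<forall>U\<in>K. ordered_sum_open I T r U"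
  show "ordered_sum_open I T r (\<Union>K)"
    unfolding ordered_sum_open_def
  proof (intro conjI ballI impI)
    show "\<Union>K \<subseteq> (\<Union>i\<in>I. topspace (T i))"
      using K unfolding ordered_sum_open_def by blast
  next
    fix i assume "i \<in> I"
    then have "openin (T i) (\<Union>U\<in>K. U \<inter> topspace (T i))"
      using K unfolding ordered_sum_open_def by (intro openin_Union) blast
    moreover have "\<Union>K \<inter> topspace (T i) = (\<Union>U\<in>K. U \<inter> topspace (T i))"
      by blast
    ultimately show "openin (T i) (\<Union>K \<inter> topspace (T i))"
      by (simp only:)
  next
    fix i j assume "i \<in> I" "\<Union>K \<inter> topspace (T i) \<noteq> {}" "j \<in> I" "r i j"
    then show "topspace (T j) \<subseteq> \<Union>K"
      using K unfolding ordered_sum_open_def by blast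
  qed
qed

lemma openin_ordered_sum_topology:
  "openin (ordered_sum_topology I T r) = ordered_sum_open I T r"
  unfolding ordered_sum_topology_def by (rule topology_inverse'[OF istopology_ordered_sum_open])

lemma topspace_ordered_sum_topology:
  "topspace (ordered_sum_topology I T r) = (\<Union>i\<in>I. topspace (T i))"
proof
  show "topspace (ordered_sum_topology I T r) \<subseteq> (\<Union>i\<in>I. topspace (T i))"
    using openin_topspace[of "ordered_sum_topology I T r"]
    unfolding openin_ordered_sum_topology ordered_sum_open_def by blast
  have "(\<Union>j\<in>I. topspace (T j)) \<inter> topspace (T i) = topspace (T i)" if "i \<in> I" for i
    using that by blast
  then have "ordered_sum_open I T r (\<Union>i\<in>I. topspace (T i))"
    unfolding ordered_sum_open_def by auto
  then show "(\<Union>i\<in>I. topspace (T i)) \<subseteq> topspace (ordered_sum_topology I T r)"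
    by (metis openin_ordered_sum_topology openin_subset)
qed

locale ordered_sum =
  fixes I :: "'i set" and T :: "'i \<Rightarrow> 'a topology" and r :: "'i \<Rightarrow> 'i \<Rightarrow> bool"
  assumes disjnt_topspace:
      "\<lbrakk>i \<in> I; j \<in> I; i \<noteq> j\<rbrakk> \<Longrightarrow> disjnt (topspace (T i)) (topspace (T j))"
    and transp_on_r: "transp_on I r"
    and irreflp_on_r: "irreflp_on I r"
begin

definition upper_extension :: "'i \<Rightarrow> 'a set \<Rightarrow> 'a set" where
  "upper_extension i V = V \<union> (\<Union>j\<in>{j\<in>I. r i j}. topspace (T j))"

lemma upper_extension_Int_topspace_self:
  assumes "i \<in> I" "V \<subseteq> topspace (T i)"
  shows "upper_extension i V \<inter> topspace (T i) = V"
proof -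
  have "disjnt (topspace (T j)) (topspace (T i))" if "j \<in> I" "r i j" for j
    using that assms(1) irreflp_onD[OF irreflp_on_r] disjnt_topspace by metis
  with assms(2) show ?thesis
    unfolding upper_extension_def disjnt_def by blast
qed

lemma upper_extension_Int_topspace_other:
  assumes "i \<in> I" "k \<in> I" "V \<subseteq> topspace (T i)" "k \<noteq> i" "\<not> r i k"
  shows "upper_extension i V \<inter> topspace (T k) = {}"
proof -
  have "disjnt (topspace (T j)) (topspace (T k))" if "j \<in> I" "r i j" for j
    using that assms(2,5) disjnt_topspace by metis
  with assms show ?thesis
    unfolding upper_extension_def using disjnt_topspace[of i k] by (auto simp: disjnt_def)
qed

lemma openin_upper_extension:
  assumes i: "i \<in> I" and V: "openin (T i) V"
  shows "openin (ordered_sum_topology I T r) (upper_extension i V)"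
  unfolding openin_ordered_sum_topology ordered_sum_open_def
proof (intro conjI ballI impI)
  have V_sub: "V \<subseteq> topspace (T i)"
    using V by (rule openin_subset)
  then show "upper_extension i V \<subseteq> (\<Union>i\<in>I. topspace (T i))"
    using i unfolding upper_extension_def by blast
  fix k assume k: "k \<in> I"
  consider "k = i" | "r i k" | "k \<noteq> i" "\<not> r i k"
    by blast
  then show "openin (T k) (upper_extension i V \<inter> topspace (T k))"
  proof cases
    case 1
    then show ?thesis
      using upper_extension_Int_topspace_self[OF i V_sub] V by simp
  next
    case 2
    then have "upper_extension i V \<inter> topspace (T k) = topspace (T k)"
      using k unfolding upper_extension_def by blast
    then show ?thesis
      by simp
  next
    case 3
    then show ?thesis
      using upper_extension_Int_topspace_other[OF i k V_sub] by simp
  qed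
  fix j assume "upper_extension i V \<inter> topspace (T k) \<noteq> {}" "j \<in> I" "r k j"
  then have "r i j"
    using upper_extension_Int_topspace_other[OF i k V_sub] transp_onD[OF transp_on_r] i k by metis
  with \<open>j \<in> I\<close> show "topspace (T j) \<subseteq> upper_extension i V"
    unfolding upper_extension_def by blast
qed

lemma subtopology_ordered_sum_topology:
  assumes i: "i \<in> I"
  shows "subtopology (ordered_sum_topology I T r) (topspace (T i)) = T i"
  unfolding topology_eq openin_subtopology
proof (intro allI iffI)
  fix U assume "\<exists>V. openin (ordered_sum_topology I T r) V \<and> U = V \<inter> topspace (T i)"
  then show "openin (T i) U"
    using i unfolding openin_ordered_sum_topology ordered_sum_open_def by blast
next
  fix U assume U: "openin (T i) U"
  then have "U = upper_extension i U \<inter> topspace (T i)"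
    using upper_extension_Int_topspace_self[OF i openin_subset] by blast
  with openin_upper_extension[OF i U]
  show "\<exists>V. openin (ordered_sum_topology I T r) V \<and> U = V \<inter> topspace (T i)"
    by blast
qed

lemma derived_set_of_singleton_ordered_sum_topology:
  assumes "i \<in> I" "j \<in> I" "x \<in> topspace (T i)" "y \<in> topspace (T j)"
    and "y \<in> ordered_sum_topology I T r derived_set_of {x}"
  shows "j = i \<or> r j i"
proof (rule ccontr)
  assume "\<not> (j = i \<or> r j i)"
  then have "upper_extension j (topspace (T j)) \<inter> topspace (T i) = {}"
    using assms(1,2) by (intro upper_extension_Int_topspace_other) auto
  moreover have "y \<in> upper_extension j (topspace (T j))"
    using assms(4) unfolding upper_extension_def by blast
  ultimately show False
    using assms(3,5) openin_upper_extension[OF assms(2) openin_topspace]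
    by (auto simp: in_derived_set_of)
qed

theorem TD_space_ordered_sum_topology:
  assumes "\<forall>i\<in>I. TD_space (T i)"
  shows "TD_space (ordered_sum_topology I T r)"
  unfolding TD_space_iff_nbhd_disjnt_derived_set topspace_ordered_sum_topology
proof
  fix x assume "x \<in> (\<Union>i\<in>I. topspace (T i))"
  then obtain i where i: "i \<in> I" and x: "x \<in> topspace (T i)"
    by blast
  with assms obtain V where V: "openin (T i) V" "x \<in> V" "disjnt V (T i derived_set_of {x})"
    unfolding TD_space_iff_nbhd_disjnt_derived_set by blast
  have "disjnt (upper_extension i V) (ordered_sum_topology I T r derived_set_of {x})"
    unfolding disjnt_def
  proof (rule equals0I)
    fix y assume "y \<in> upper_extension i V \<inter> ordered_sum_topology I T r derived_set_of {x}"
    then have y: "y \<in> upper_extension i V" "y \<in> ordered_sum_topology I T r derived_set_of {x}"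
      by auto
    show False
    proof (cases "y \<in> V")
      case True
      have "T i derived_set_of {x} =
          subtopology (ordered_sum_topology I T r) (topspace (T i)) derived_set_of {x}"
        by (simp add: subtopology_ordered_sum_topology i)
      also have "\<dots> = topspace (T i) \<inter> ordered_sum_topology I T r derived_set_of {x}"
        using x by (simp add: derived_set_of_subtopology)
      finally have "y \<in> T i derived_set_of {x}"
        using True y(2) openin_subset[OF V(1)] by blast
      with True V(3) show False
        by (simp add: disjnt_iff)
    next
      case False
      then obtain j where j: "j \<in> I" "r i j" "y \<in> topspace (T j)"
        using y(1) unfolding upper_extension_def by blast
      with derived_set_of_singleton_ordered_sum_topology[OF i j(1) x j(3) y(2)]
      have "r i i"
        using transp_onD[OF transp_on_r] i by metis
      with i irreflp_on_r show False
        by (simp add: irreflp_onD)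
    qed
  qed
  moreover have "x \<in> upper_extension i V"
    using V(2) unfolding upper_extension_def by blast
  ultimately show "\<exists>U. openin (ordered_sum_topology I T r) U \<and> x \<in> U \<and>
      disjnt U (ordered_sum_topology I T r derived_set_of {x})"
    using openin_upper_extension[OF i V(1)] by blast
qed

end

lemma equiv_cluster_rel:
  assumes "transp R"
  shows "equiv W (cluster_rel W R)"
  using assms unfolding equiv_def refl_on_def sym_def trans_def cluster_rel_def
  by (blast dest: transpD)

lemma mutually_related_in_cluster:
  assumes "transp R" "C \<in> clusters W R" "x \<in> C" "y \<in> C" "x \<noteq> y"
  shows "R x y"
proof -
  have "(x, y) \<in> cluster_rel W R"
    using in_quotient_imp_in_rel[OF equiv_cluster_rel[OF assms(1)]] assms(2-4)
    unfolding clusters_def by blast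
  with assms(5) show ?thesis
    unfolding cluster_rel_def by blast
qed

lemma transp_on_cluster_R_up:
  assumes "transp R"
  shows "transp_on (clusters W R) (cluster_R_up R)"
proof -
  have "cluster_R R C E"
    if "D \<in> clusters W R" "cluster_R R C D" "cluster_R R D E" for C D E
  proof -
    from that(2,3) obtain x y y' z where "x \<in> C" "y \<in> D" "R x y" "y' \<in> D" "z \<in> E" "R y' z"
      unfolding cluster_R_def by blast
    moreover have "R x y'"
      using mutually_related_in_cluster[OF assms that(1) \<open>y \<in> D\<close> \<open>y' \<in> D\<close>] \<open>R x y\<close>
      by (cases "y = y'") (auto dest: transpD[OF assms])
    ultimately show ?thesis
      unfolding cluster_R_def by (blast dest: transpD[OF assms])
  qed
  then show ?thesis
    unfolding cluster_R_up_def by (blast intro: transp_onI)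
qed

lemma disjnt_XC:
  assumes "transp R" "XF_data W R Xw T" "C \<in> clusters W R" "D \<in> clusters W R" "C \<noteq> D"
  shows "disjnt (XC Xw C) (XC Xw D)"
proof -
  have "C \<subseteq> W" "D \<subseteq> W"
    using assms(3,4) in_quotient_imp_subset[OF equiv_cluster_rel[OF assms(1)]]
    unfolding clusters_def by auto
  moreover have "C \<inter> D = {}"
    using assms(3-5) quotient_disj[OF equiv_cluster_rel[OF assms(1)]]
    unfolding clusters_def by blast
  moreover have "\<And>v w. \<lbrakk>v \<in> W; w \<in> W; v \<noteq> w\<rbrakk> \<Longrightarrow> Xw v \<inter> Xw w = {}"
    using assms(2) unfolding XF_data_def by blast
  ultimately show ?thesis
    unfolding XC_def disjnt_def by blast
qed

lemma XF_data_topspace: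
  "\<lbrakk>XF_data W R Xw T; C \<in> clusters W R\<rbrakk> \<Longrightarrow> topspace (T C) = XC Xw C"
  unfolding XF_data_def by simp

lemma XF_eq_ordered_sum_topology:
  assumes "XF_data W R Xw T"
  shows "XF W R Xw T = ordered_sum_topology (clusters W R) T (cluster_R_up R)"
  unfolding XF_def ordered_sum_topology_def ordered_sum_open_def
  by (simp only: XF_data_topspace[OF assms] cong: SUP_cong ball_cong)

theorem lemma4:
  fixes W :: "'w set" and R :: "'w \<Rightarrow> 'w \<Rightarrow> bool"
    and Xw :: "'w \<Rightarrow> 'a set" and T :: "'w set \<Rightarrow> 'a topology"
  assumes "finite_transitive_frame W R"
    and "XF_data W R Xw T"
    and "\<forall>C\<in>clusters W R. TD_space (T C)"
  shows "TD_space (XF W R Xw T)"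
proof -
  have R: "transp R"
    using assms(1) unfolding finite_transitive_frame_def by (blast intro: transpI)
  interpret ordered_sum "clusters W R" T "cluster_R_up R"
    using XF_data_topspace[OF assms(2)] disjnt_XC[OF R assms(2)] transp_on_cluster_R_up[OF R]
    by unfold_locales (simp_all add: irreflp_on_def cluster_R_up_def)
  show ?thesis
    using TD_space_ordered_sum_topology[OF assms(3)] XF_eq_ordered_sum_topology[OF assms(2)]
    by simp
qed

end
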